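(* Let $d\ge1$ and let $X_1,\dots,X_n$ be independent random vectors in $\mathbb{R}^d$ with $\mathbb{E}X_i=0$ and $\mathbb{E}\|X_i\|_\infty^2<\infty$, and $S_n:=\sum_{i=1}^nX_i$. Then $$\mathbb{E}\|S_n\|_\infty^2\le\bigl(1+3.46\sqrt{\log(2d)}\bigr)^2\sum_{i=1}^n\mathbb{E}\|X_i\|_\infty^2 .$$ If in addition each $X_i$ is symmetrically distributed around $0$ (i.e. $-X_i$ has the same distribution as $X_i$), then $$\mathbb{E}\|S_n\|_\infty^2\le\bigl(1+2.9\sqrt{\log(2d)}\bigr)^2\sum_{i=1}^n\mathbb{E}\|X_i\|_\infty^2 .$$
   Context: $\|x\|_\infty:=\max_{1\le j\le d}|x_j|$; $\log$ is the natural logarithm. *)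

theory Defs
  imports "HOL-Probability.Probability"
begin

definition linf_norm :: "real ^ 'd \<Rightarrow> real" where
  "linf_norm x = Max (range (\<lambda>j. \<bar>x $ j\<bar>))"

end

theory Submission
  imports Defs
begin

(* The sup-norm is compared with a smooth norm: for e > 0 and k >= 1 let
     smooth_norm e k x = (e + sum_j x_j^(2k)) powr (1/k),
   which dominates linf_norm x ^ 2 and tends to the squared l_(2k)-norm as e -> 0.
   Along a line t |-> x + t y its second derivative is at most 2 (2k-1) d^(1/k) linf_norm y ^ 2
   (by a Hoelder-type bound on sum_j z_j^(2k-2)), so a second-order Taylor bound gives
     smooth_norm (x + y) <= smooth_norm x + <grad, y> + (2k-1) d^(1/k) linf_norm y ^ 2.
   Taking expectations with x = S_m and y = X_(m+1), which are independent, the linear term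
   vanishes because E X_(m+1) = 0; induction on m gives
     E linf_norm S_n ^ 2 <= e^(1/k) + (2k-1) d^(1/k) sum_i E linf_norm X_i ^ 2,
   and e -> 0 removes the first term.  Finally k = max 1 (ceiling (ln d)) makes
   (2k-1) d^(1/k) <= (2 ln d + 1) exp 1 <= (1 + 2.9 sqrt (ln (2d)))^2.  This bound needs no
   symmetry, so it proves both claims of the theorem (2.9 <= 3.46). *)

lemma vec_nth_borel_measurable [measurable]: "(\<lambda>x::real^'d. x $ j) \<in> borel_measurable borel"
  using bounded_linear_vec_nth[of j] by (simp add: borel_measurable_continuous_onI linear_continuous_on)

lemma linf_norm_borel_measurable [measurable]: "(linf_norm :: real^'d \<Rightarrow> real) \<in> borel_measurable borel"
  unfolding linf_norm_def[abs_def] by measurable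

lemma abs_le_linf_norm: "\<bar>x $ j\<bar> \<le> linf_norm x"
  unfolding linf_norm_def by (rule Max_ge) auto

lemma powr_inverse_power:
  fixes a :: real
  assumes "a \<ge> 0" "k \<ge> 1"
  shows "(a^k) powr (1/real k) = a"
  using assms by (cases "a = 0") (simp_all add: powr_realpow[symmetric] powr_powr)

lemma weighted_am_gm:
  fixes u :: real
  assumes "u \<ge> 0"
  shows "real (Suc m) * u ^ m \<le> real m * u ^ Suc m + 1"
proof (induction m)
  case 0
  then show ?case by simp
next
  case (Suc m)
  have "0 \<le> (u ^ Suc m - 1) * (u - 1)"
  proof (cases "u \<le> 1")
    case True
    then have "u ^ Suc m \<le> 1" by (rule power_le_one[OF assms])
    then show ?thesis using True by (intro mult_nonpos_nonpos) auto
  next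
    case False
    then have "1 \<le> u ^ Suc m" by (intro one_le_power) auto
    then show ?thesis using False by simp
  qed
  moreover have "u * (real (Suc m) * u ^ m) \<le> u * (real m * u ^ Suc m + 1)"
    using Suc assms by (intro mult_left_mono) auto
  ultimately show ?case by (simp add: algebra_simps)
qed

text \<open>It is proved by applying the weighted
  AM-GM inequality to each \<open>z\<^sub>j\<^sup>2 / l\<close> with the scale \<open>l = (M/d)\<^sup>1\<^sup>/\<^sup>k\<close>.\<close>
lemma lower_power_sum_bound:
  fixes z :: "real ^ 'd" and M :: real
  assumes k: "k \<ge> 1" and M: "M > 0" and sum_le: "(\<Sum>j\<in>UNIV. (z$j)^(2*k)) \<le> M"
  shows "M powr (1/k - 1) * (\<Sum>j\<in>UNIV. (z$j)^(2*k-2)) \<le> real CARD('d) powr (1/k)"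
proof -
  define c where "c = real CARD('d)"
  define l where "l = (M/c) powr (1/k)"
  have c: "c > 0" and kpos: "real k > 0" using k unfolding c_def by simp_all
  have l: "l > 0" using M c unfolding l_def by simp
  have lk: "l ^ k = M / c"
    unfolding l_def using M c k by (simp add: powr_realpow[symmetric] powr_powr)
  obtain m where km: "k = Suc m" using k by (cases k) auto
  have each: "l * (z$j)^(2*k-2) \<le> (real k - 1)/k * (z$j)^(2*k) + l^k / k" for j
  proof -
    define w where "w = (z$j)^2"
    have "l ^ k * (real k * (w/l) ^ m) \<le> l ^ k * ((real k - 1) * (w/l) ^ k + 1)"
      using weighted_am_gm[of "w/l" m] l km unfolding w_def by (intro mult_left_mono) auto
    moreover have "l ^ k * (w/l) ^ m = l * w ^ m" "l ^ k * (w/l) ^ k = w ^ k"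
      using l km by (simp_all add: power_divide)
    moreover have "2*k-2 = 2*m" using km by simp
    then have "w ^ m = (z$j)^(2*k-2)" "w ^ k = (z$j)^(2*k)"
      unfolding w_def by (simp_all only: power_mult)
    ultimately have "real k * (l * (z$j)^(2*k-2)) \<le> (real k - 1) * (z$j)^(2*k) + l^k"
      by (simp add: algebra_simps)
    then show ?thesis using kpos by (simp add: field_simps)
  qed
  have "l * (\<Sum>j\<in>UNIV. (z$j)^(2*k-2)) \<le> (\<Sum>j\<in>UNIV. (real k - 1)/k * (z$j)^(2*k) + l^k / k)"
    unfolding sum_distrib_left by (intro sum_mono each)
  also have "\<dots> = (real k - 1)/k * (\<Sum>j\<in>UNIV. (z$j)^(2*k)) + c * (l^k / k)"
    by (simp add: sum.distrib sum_distrib_left c_def)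
  also have "\<dots> \<le> (real k - 1)/k * M + c * (l^k / k)"
    using sum_le k by (intro add_right_mono mult_left_mono) auto
  also have "\<dots> = M" using lk c kpos by (simp add: field_simps)
  finally have "(\<Sum>j\<in>UNIV. (z$j)^(2*k-2)) \<le> M / l" using l by (simp add: field_simps)
  then have "M powr (1/k - 1) * (\<Sum>j\<in>UNIV. (z$j)^(2*k-2)) \<le> M powr (1/k - 1) * (M / l)"
    by (intro mult_left_mono) auto
  also have "\<dots> = c powr (1/k)"
    unfolding l_def using M c by (simp add: powr_diff powr_divide)
  finally show ?thesis unfolding c_def .
qed

lemma second_order_upper_bound:
  fixes f f' f'' :: "real \<Rightarrow> real"
  assumes df: "\<And>t. 0 \<le> t \<Longrightarrow> t \<le> 1 \<Longrightarrow> (f has_real_derivative f' t) (at t)"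
    and df': "\<And>t. 0 \<le> t \<Longrightarrow> t \<le> 1 \<Longrightarrow> (f' has_real_derivative f'' t) (at t)"
    and f'': "\<And>t. 0 \<le> t \<Longrightarrow> t \<le> 1 \<Longrightarrow> f'' t \<le> 2 * C"
  shows "f 1 \<le> f 0 + f' 0 + C"
proof -
  define g where "g t = f t - C * t\<^sup>2" for t
  define g' where "g' t = f' t - 2 * C * t" for t
  have dg: "(g has_real_derivative g' t) (at t)" if "0 \<le> t" "t \<le> 1" for t
    unfolding g_def[abs_def] g'_def using df[OF that] by (auto intro!: derivative_eq_intros)
  have dg': "(g' has_real_derivative f'' t - 2 * C) (at t)" if "0 \<le> t" "t \<le> 1" for t
    unfolding g'_def[abs_def] using df'[OF that] by (auto intro!: derivative_eq_intros)
  obtain z where z: "0 < z" "z < 1" "g 1 - g 0 = (1 - 0) * g' z"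
    using MVT2[of 0 1 g g'] dg by auto
  have "g' z \<le> g' 0"
    by (rule DERIV_nonpos_imp_nonincreasing[of 0 z g']) (use z dg' f'' in fastforce)+
  then show ?thesis using z unfolding g_def g'_def by simp
qed

section \<open>A smooth approximation of the squared sup-norm\<close>

definition power_sum :: "nat \<Rightarrow> real^'d \<Rightarrow> real" where
  "power_sum k x = (\<Sum>j\<in>UNIV. (x$j)^(2*k))"

definition smooth_norm :: "real \<Rightarrow> nat \<Rightarrow> real^'d \<Rightarrow> real" where
  "smooth_norm e k x = (e + power_sum k x) powr (1/real k)"

definition smooth_grad :: "real \<Rightarrow> nat \<Rightarrow> real^'d \<Rightarrow> 'd \<Rightarrow> real" where
  "smooth_grad e k x j = 2 * (e + power_sum k x) powr (1/real k - 1) * (x$j)^(2*k-1)"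

lemma power_sum_nonneg: "0 \<le> power_sum k x"
  unfolding power_sum_def by (intro sum_nonneg) (simp add: power_mult)

lemma power_le_power_sum: "(x$j)^(2*k) \<le> power_sum k x"
  unfolding power_sum_def by (rule member_le_sum) (auto simp: power_mult)

lemma smooth_norm_nonneg: "0 \<le> smooth_norm e k x"
  unfolding smooth_norm_def by simp

lemma smooth_norm_borel_measurable [measurable]:
  "(smooth_norm e k :: real^'d \<Rightarrow> real) \<in> borel_measurable borel"
  unfolding smooth_norm_def[abs_def] power_sum_def by measurable

lemma smooth_grad_borel_measurable [measurable]:
  "(\<lambda>x::real^'d. smooth_grad e k x j) \<in> borel_measurable borel"
  unfolding smooth_grad_def[abs_def] power_sum_def by measurable

lemma smooth_norm_zero:
  assumes "k \<ge> 1"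
  shows "smooth_norm e k (0::real^'d) = e powr (1/real k)"
  using assms unfolding smooth_norm_def power_sum_def by (simp add: power_0_left)

lemma linf_norm_sq_le_smooth_norm:
  assumes e: "e > 0" and k: "k \<ge> 1"
  shows "(linf_norm x)\<^sup>2 \<le> smooth_norm e k x"
proof -
  have "linf_norm x \<in> range (\<lambda>j. \<bar>x$j\<bar>)"
    unfolding linf_norm_def by (rule Max_in) auto
  then obtain j where j: "linf_norm x = \<bar>x$j\<bar>" by auto
  have "(linf_norm x)\<^sup>2 = (((x$j)^2)^k) powr (1/real k)"
    using j powr_inverse_power[of "(x$j)^2" k] k by simp
  also have "\<dots> \<le> (e + power_sum k x) powr (1/real k)"
    using power_le_power_sum[of x j k] e by (intro powr_mono2) (auto simp: power_mult)
  finally show ?thesis unfolding smooth_norm_def .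
qed

text \<open>If \<open>w\<^sup>2\<^sup>k \<le> M\<close> then \<open>M\<^sup>1\<^sup>/\<^sup>k\<^sup>-\<^sup>1 w\<^sup>2\<^sup>k\<^sup>-\<^sup>1 \<le> M\<^sup>1\<^sup>/\<^sup>(\<^sup>2\<^sup>k\<^sup>)\<close>: each gradient coordinate is of the order of
  the square root of the smooth norm.\<close>
lemma powr_odd_power_bound:
  fixes w M :: real
  assumes w: "w \<ge> 0" and w_pow: "w^(2*k) \<le> M" and M: "M > 0" and k: "k \<ge> 1"
  shows "M powr (1/real k - 1) * w^(2*k-1) \<le> M powr (1/(2*real k))"
proof (cases "w = 0")
  case True
  then show ?thesis using k by (simp add: power_0_left)
next
  case False
  then have w: "w > 0" using w by simp
  have kpos: "real k > 0" using k by simp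
  have "w = (w powr (2*real k)) powr (1/(2*real k))"
    using w kpos by (simp add: powr_powr)
  also have "\<dots> \<le> M powr (1/(2*real k))"
    using w_pow w kpos by (intro powr_mono2) (auto simp: powr_realpow[symmetric])
  finally have w_le: "w \<le> M powr (1/(2*real k))" .
  have "w^(2*k-1) = w powr real (2*k-1)" using w by (simp add: powr_realpow)
  also have "\<dots> \<le> (M powr (1/(2*real k))) powr real (2*k-1)"
    using w_le w by (intro powr_mono2) auto
  also have "\<dots> = M powr ((2*real k - 1)/(2*real k))"
    using k by (simp add: powr_powr of_nat_diff)
  finally have "M powr (1/real k - 1) * w^(2*k-1)
      \<le> M powr (1/real k - 1) * M powr ((2*real k - 1)/(2*real k))"
    by (intro mult_left_mono) auto
  also have "\<dots> = M powr (1/(2*real k))"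
    using kpos by (simp add: powr_add[symmetric] field_simps)
  finally show ?thesis .
qed

text \<open>The gradient grows at most like the smooth norm itself; this gives integrability.\<close>
lemma smooth_grad_bound:
  assumes e: "e > 0" and k: "k \<ge> 1"
  shows "\<bar>smooth_grad e k x j\<bar> \<le> 2 * (1 + smooth_norm e k x)"
proof -
  define M where "M = e + power_sum k x"
  define w where "w = \<bar>x$j\<bar>"
  have M: "M > 0" unfolding M_def using e power_sum_nonneg[of k x] by simp
  have w_pow: "w^(2*k) \<le> M"
    unfolding M_def w_def using power_le_power_sum[of x j k] e by (simp add: power_even_abs)
  have "\<bar>smooth_grad e k x j\<bar> = 2 * (M powr (1/real k - 1) * w^(2*k-1))"
    unfolding smooth_grad_def M_def w_def by (simp add: abs_mult power_abs)
  also have "\<dots> \<le> 2 * M powr (1/(2*real k))"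
    using powr_odd_power_bound[OF _ w_pow M k] unfolding w_def by simp
  also have "\<dots> \<le> 2 * (1 + M powr (1/real k))"
  proof -
    define a where "a = M powr (1/(2*real k))"
    have "a \<le> 1 + a * a"
      using zero_le_square[of "a - 1/2"] by (simp add: algebra_simps)
    moreover have "a * a = M powr (1/real k)" unfolding a_def by (simp add: powr_add[symmetric])
    ultimately have "a \<le> 1 + M powr (1/real k)" by simp
    then show ?thesis unfolding a_def by simp
  qed
  finally show ?thesis unfolding smooth_norm_def M_def .
qed

lemma curvature_bound:
  fixes z y :: "real^'d"
  assumes k: "k \<ge> 1" and M: "M > 0" and le: "power_sum k z \<le> M"
  shows "M powr (1/k - 1) * (\<Sum>j\<in>UNIV. (z$j)^(2*k-2) * (y$j)\<^sup>2)
           \<le> real CARD('d) powr (1/k) * (linf_norm y)\<^sup>2"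
proof -
  have "2*k-2 = 2*(k-1)" by simp
  then have even_nonneg: "0 \<le> (z$j)^(2*k-2)" for j
    by (simp only: power_mult zero_le_power zero_le_power2)
  have "(y$j)\<^sup>2 \<le> (linf_norm y)\<^sup>2" for j
    using abs_le_linf_norm[of y j] by (metis abs_ge_zero power2_abs power_mono)
  then have "(\<Sum>j\<in>UNIV. (z$j)^(2*k-2) * (y$j)\<^sup>2) \<le> (\<Sum>j\<in>UNIV. (z$j)^(2*k-2) * (linf_norm y)\<^sup>2)"
    by (intro sum_mono mult_left_mono even_nonneg)
  also have "\<dots> = (linf_norm y)\<^sup>2 * (\<Sum>j\<in>UNIV. (z$j)^(2*k-2))"
    unfolding sum_distrib_left by (simp add: mult.commute)
  finally have "M powr (1/k - 1) * (\<Sum>j\<in>UNIV. (z$j)^(2*k-2) * (y$j)\<^sup>2)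
      \<le> M powr (1/k - 1) * ((linf_norm y)\<^sup>2 * (\<Sum>j\<in>UNIV. (z$j)^(2*k-2)))"
    by (rule mult_left_mono) simp
  also have "\<dots> = (linf_norm y)\<^sup>2 * (M powr (1/k - 1) * (\<Sum>j\<in>UNIV. (z$j)^(2*k-2)))"
    by (simp add: ac_simps)
  also have "\<dots> \<le> (linf_norm y)\<^sup>2 * real CARD('d) powr (1/k)"
    using lower_power_sum_bound[OF k M le[unfolded power_sum_def]] by (intro mult_left_mono) auto
  finally show ?thesis by (simp add: mult.commute)
qed

text \<open>The one-dimensional core of the expansion: if \<open>M > 0\<close>, \<open>M' = 2k P\<close>, \<open>P' = (2k-1) Q\<close> and
  \<open>M\<^sup>1\<^sup>/\<^sup>k\<^sup>-\<^sup>1 Q \<le> B\<close>, then \<open>M\<^sup>1\<^sup>/\<^sup>k\<close> has second derivative at most \<open>2(2k-1)B\<close>; the part of it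
  coming from \<open>M'\<close> is nonpositive because \<open>1/k - 1 \<le> 0\<close>.\<close>
lemma root_second_order_bound:
  fixes M P Q :: "real \<Rightarrow> real"
  assumes k: "k \<ge> 1" and M_pos: "\<And>t. M t > 0"
    and dM: "\<And>t. (M has_real_derivative 2 * real k * P t) (at t)"
    and dP: "\<And>t. (P has_real_derivative (2 * real k - 1) * Q t) (at t)"
    and curv: "\<And>t. M t powr (1/k - 1) * Q t \<le> B"
  shows "M 1 powr (1/k) \<le> M 0 powr (1/k) + 2 * M 0 powr (1/k - 1) * P 0 + (2 * real k - 1) * B"
proof -
  have kpos: "real k > 0" using k by simp
  define f' where "f' t = 2 * M t powr (1/k-1) * P t" for t
  define f'' where "f'' t = 2 * ((1/k-1) * M t powr (1/k-1-1) * (2*real k*P t)) * P t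
      + (2*real k - 1) * Q t * (2 * M t powr (1/k-1))" for t
  have df: "((\<lambda>t. M t powr (1/k)) has_real_derivative f' t) (at t)" for t
    by (rule DERIV_cong[OF DERIV_chain2[OF has_real_derivative_powr[OF M_pos] dM]])
       (use kpos in \<open>simp add: f'_def field_simps\<close>)
  have df': "(f' has_real_derivative f'' t) (at t)" for t
  proof -
    note dMp = DERIV_chain2[OF has_real_derivative_powr[OF M_pos] dM, of "1/k-1"]
    show ?thesis unfolding f'_def[abs_def] f''_def
      by (rule DERIV_mult[OF DERIV_cmult[OF dMp, of 2] dP])
  qed
  have f''_le: "f'' t \<le> 2 * ((2 * real k - 1) * B)" for t
  proof -
    have "(1/k-1) * (M t powr (1/k-1-1) * (2*real k) * (P t * P t)) \<le> 0"
      using k by (intro mult_nonpos_nonneg mult_nonneg_nonneg[of _ "P t * P t"] zero_le_square)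
        (auto simp: field_simps)
    then have "2 * ((1/k-1) * M t powr (1/k-1-1) * (2*real k*P t)) * P t \<le> 0"
      by (simp add: ac_simps)
    moreover have "(2*real k - 1) * Q t * (2 * M t powr (1/k-1)) \<le> 2 * ((2 * real k - 1) * B)"
    proof -
      have "2 * (2*real k - 1) * (M t powr (1/k - 1) * Q t) \<le> 2 * (2*real k - 1) * B"
        using curv[of t] k by (intro mult_left_mono) auto
      then show ?thesis by (simp only: ac_simps)
    qed
    ultimately show ?thesis unfolding f''_def by linarith
  qed
  show ?thesis
    using second_order_upper_bound[OF df df' f''_le] unfolding f'_def by simp
qed

lemma smooth_norm_expansion:
  fixes x y :: "real ^ 'd"
  assumes e: "e > 0" and k: "k \<ge> 1"
  shows "smooth_norm e k (x + y) \<le> smooth_norm e k x + (\<Sum>j\<in>UNIV. smooth_grad e k x j * y$j)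
           + (2*real k - 1) * real CARD('d) powr (1/k) * (linf_norm y)\<^sup>2"
proof -
  define M where "M t = e + (\<Sum>j\<in>UNIV. (x$j + t*y$j)^(2*k))" for t
  define P where "P t = (\<Sum>j\<in>UNIV. (x$j + t*y$j)^(2*k-1) * y$j)" for t
  define Q where "Q t = (\<Sum>j\<in>UNIV. (x$j + t*y$j)^(2*k-2) * (y$j)\<^sup>2)" for t
  have M_eq: "M t = e + power_sum k (x + t *\<^sub>R y)" for t
    unfolding M_def power_sum_def by simp
  have M_pos: "M t > 0" for t
    using e power_sum_nonneg[of k "x + t *\<^sub>R y"] unfolding M_eq by linarith
  have dM: "(M has_real_derivative 2*real k*P t) (at t)" for t
    unfolding M_def[abs_def] P_def
    by (auto intro!: derivative_eq_intros simp: sum_distrib_left algebra_simps)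
  have dP: "(P has_real_derivative (2*real k - 1) * Q t) (at t)" for t
  proof -
    have "2*k-1-1 = 2*k-2" and "real (2*k-1) = 2*real k - 1" using k by (simp_all add: of_nat_diff)
    then show ?thesis
      unfolding P_def[abs_def] Q_def
      by (auto intro!: derivative_eq_intros simp: sum_distrib_left algebra_simps power2_eq_square)
  qed
  have curv: "M t powr (1/k - 1) * Q t \<le> real CARD('d) powr (1/k) * (linf_norm y)\<^sup>2" for t
    using curvature_bound[OF k M_pos[of t], of "x + t *\<^sub>R y" y] M_eq e unfolding Q_def by simp
  have "M 1 = e + power_sum k (x + y)" "M 0 = e + power_sum k x"
    unfolding M_def power_sum_def by simp_all
  moreover have "2 * M 0 powr (1/k - 1) * P 0 = (\<Sum>j\<in>UNIV. smooth_grad e k x j * y$j)"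
    unfolding M_def P_def smooth_grad_def power_sum_def by (simp add: sum_distrib_left mult.assoc)
  ultimately show ?thesis
    using root_second_order_bound[OF k M_pos dM dP curv] unfolding smooth_norm_def by (simp add: ac_simps)
qed

section \<open>Sums of independent random vectors\<close>

context prob_space
begin

lemma integrable_of_linf_norm_sq:
  fixes Y :: "'a \<Rightarrow> real^'d"
  assumes Y: "Y \<in> borel_measurable M" and Y_sq: "integrable M (\<lambda>\<omega>. (linf_norm (Y \<omega>))\<^sup>2)"
  shows "integrable M Y"
proof (rule Bochner_Integration.integrable_bound[OF _ Y])
  show "integrable M (\<lambda>\<omega>. real CARD('d) * (1 + (linf_norm (Y \<omega>))\<^sup>2))"
    using Y_sq by simp
  show "AE \<omega> in M. norm (Y \<omega>) \<le> norm (real CARD('d) * (1 + (linf_norm (Y \<omega>))\<^sup>2))"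
  proof (rule AE_I2)
    fix \<omega>
    have "norm (Y \<omega>) \<le> (\<Sum>j\<in>UNIV. \<bar>Y \<omega> $ j\<bar>)" by (rule norm_le_l1_cart)
    also have "\<dots> \<le> real (card (UNIV :: 'd set)) * (1 + (linf_norm (Y \<omega>))\<^sup>2)"
    proof (rule sum_bounded_above)
      fix j
      have "linf_norm (Y \<omega>) \<le> 1 + (linf_norm (Y \<omega>))\<^sup>2"
        using zero_le_square[of "linf_norm (Y \<omega>) - 1/2"] by (simp add: algebra_simps power2_eq_square)
      then show "\<bar>Y \<omega> $ j\<bar> \<le> 1 + (linf_norm (Y \<omega>))\<^sup>2"
        using abs_le_linf_norm[of "Y \<omega>" j] by linarith
    qed
    finally show "norm (Y \<omega>) \<le> norm (real CARD('d) * (1 + (linf_norm (Y \<omega>))\<^sup>2))"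
      by simp
  qed
qed

lemma indep_var_partial_sum:
  fixes X :: "'i \<Rightarrow> 'a \<Rightarrow> real^'d"
  assumes indep: "indep_vars (\<lambda>_. borel) X I" and A: "A \<subseteq> I" and i: "i \<in> I" "i \<notin> A"
  shows "indep_var borel (\<lambda>\<omega>. \<Sum>j\<in>A. X j \<omega>) borel (X i)"
proof -
  have "indep_var borel ((\<lambda>f. \<Sum>j\<in>A. f j) \<circ> (\<lambda>\<omega>. restrict (\<lambda>j. X j \<omega>) A))
      borel ((\<lambda>f. f i) \<circ> (\<lambda>\<omega>. restrict (\<lambda>j. X j \<omega>) {i}))"
    using A i by (intro indep_var_compose[OF indep_var_restrict[OF indep]]) auto
  also have "(\<lambda>f. \<Sum>j\<in>A. f j) \<circ> (\<lambda>\<omega>. restrict (\<lambda>j. X j \<omega>) A) = (\<lambda>\<omega>. \<Sum>j\<in>A. X j \<omega>)"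
    by (auto simp: comp_def intro!: ext sum.cong)
  also have "(\<lambda>f. f i) \<circ> (\<lambda>\<omega>. restrict (\<lambda>j. X j \<omega>) {i}) = X i"
    by auto
  finally show ?thesis .
qed

lemma first_order_term_mean_zero:
  fixes S Y :: "'a \<Rightarrow> real^'d"
  assumes ind: "indep_var borel S borel Y" and mean0: "expectation Y = 0"
    and Y_sq: "integrable M (\<lambda>\<omega>. (linf_norm (Y \<omega>))\<^sup>2)"
    and S_int: "integrable M (\<lambda>\<omega>. smooth_norm e k (S \<omega>))"
    and e: "e > 0" and k: "k \<ge> 1"
  shows "integrable M (\<lambda>\<omega>. smooth_grad e k (S \<omega>) j * Y \<omega> $ j)"
    and "expectation (\<lambda>\<omega>. smooth_grad e k (S \<omega>) j * Y \<omega> $ j) = 0"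
proof -
  have S: "S \<in> borel_measurable M" and Y: "Y \<in> borel_measurable M"
    using indep_var_rv1[OF ind] indep_var_rv2[OF ind] by auto
  have Y_int: "integrable M Y" by (rule integrable_of_linf_norm_sq[OF Y Y_sq])
  have Yj_int: "integrable M (\<lambda>\<omega>. Y \<omega> $ j)"
    by (rule integrable_bounded_linear[OF bounded_linear_vec_nth Y_int])
  have Yj_mean: "expectation (\<lambda>\<omega>. Y \<omega> $ j) = 0"
    using integral_bounded_linear[OF bounded_linear_vec_nth Y_int] mean0 by simp
  have grad_int: "integrable M (\<lambda>\<omega>. smooth_grad e k (S \<omega>) j)"
  proof (rule Bochner_Integration.integrable_bound)
    show "integrable M (\<lambda>\<omega>. 2 * (1 + smooth_norm e k (S \<omega>)))" using S_int by simp
    show "(\<lambda>\<omega>. smooth_grad e k (S \<omega>) j) \<in> borel_measurable M" using S by measurable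
    show "AE \<omega> in M. norm (smooth_grad e k (S \<omega>) j) \<le> norm (2 * (1 + smooth_norm e k (S \<omega>)))"
    proof (rule AE_I2)
      fix \<omega>
      show "norm (smooth_grad e k (S \<omega>) j) \<le> norm (2 * (1 + smooth_norm e k (S \<omega>)))"
        using smooth_grad_bound[OF e k, of "S \<omega>" j] smooth_norm_nonneg[of e k "S \<omega>"] by simp
    qed
  qed
  have grad_indep: "indep_var borel (\<lambda>\<omega>. smooth_grad e k (S \<omega>) j) borel (\<lambda>\<omega>. Y \<omega> $ j)"
    using indep_var_compose[OF ind, of "\<lambda>x. smooth_grad e k x j" borel "\<lambda>x. x $ j" borel]
    by (simp add: comp_def)
  show "integrable M (\<lambda>\<omega>. smooth_grad e k (S \<omega>) j * Y \<omega> $ j)"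
    by (rule indep_var_integrable[OF grad_indep grad_int Yj_int])
  show "expectation (\<lambda>\<omega>. smooth_grad e k (S \<omega>) j * Y \<omega> $ j) = 0"
    using indep_var_lebesgue_integral[OF grad_indep grad_int Yj_int] Yj_mean by simp
qed

lemma smooth_norm_increment:
  fixes S Y :: "'a \<Rightarrow> real^'d"
  assumes ind: "indep_var borel S borel Y" and mean0: "expectation Y = 0"
    and Y_sq: "integrable M (\<lambda>\<omega>. (linf_norm (Y \<omega>))\<^sup>2)"
    and S_int: "integrable M (\<lambda>\<omega>. smooth_norm e k (S \<omega>))"
    and e: "e > 0" and k: "k \<ge> 1"
  shows "integrable M (\<lambda>\<omega>. smooth_norm e k (S \<omega> + Y \<omega>)) \<and>
    expectation (\<lambda>\<omega>. smooth_norm e k (S \<omega> + Y \<omega>)) \<le> expectation (\<lambda>\<omega>. smooth_norm e k (S \<omega>))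
      + (2*real k - 1) * real CARD('d) powr (1/k) * expectation (\<lambda>\<omega>. (linf_norm (Y \<omega>))\<^sup>2)"
proof -
  define C where "C = (2*real k - 1) * real CARD('d) powr (1/k)"
  note lin_int = first_order_term_mean_zero(1)[OF ind mean0 Y_sq S_int e k]
  note lin_mean = first_order_term_mean_zero(2)[OF ind mean0 Y_sq S_int e k]
  have S: "S \<in> borel_measurable M" and Y: "Y \<in> borel_measurable M"
    using indep_var_rv1[OF ind] indep_var_rv2[OF ind] by auto
  define R where "R \<omega> = smooth_norm e k (S \<omega>) + (\<Sum>j\<in>UNIV. smooth_grad e k (S \<omega>) j * Y \<omega> $ j)
      + C * (linf_norm (Y \<omega>))\<^sup>2" for \<omega>
  have R_int: "integrable M R"
    unfolding R_def[abs_def] using S_int lin_int Y_sq by auto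
  have R_mean: "expectation R = expectation (\<lambda>\<omega>. smooth_norm e k (S \<omega>))
      + C * expectation (\<lambda>\<omega>. (linf_norm (Y \<omega>))\<^sup>2)"
    unfolding R_def[abs_def] using S_int lin_int lin_mean Y_sq
    by (simp add: Bochner_Integration.integral_sum)
  have pointwise: "smooth_norm e k (S \<omega> + Y \<omega>) \<le> R \<omega>" for \<omega>
    unfolding R_def C_def by (rule smooth_norm_expansion[OF e k])
  have int: "integrable M (\<lambda>\<omega>. smooth_norm e k (S \<omega> + Y \<omega>))"
  proof (rule Bochner_Integration.integrable_bound[OF R_int])
    show "(\<lambda>\<omega>. smooth_norm e k (S \<omega> + Y \<omega>)) \<in> borel_measurable M" using S Y by measurable
    show "AE \<omega> in M. norm (smooth_norm e k (S \<omega> + Y \<omega>)) \<le> norm (R \<omega>)"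
    proof (rule AE_I2)
      fix \<omega>
      show "norm (smooth_norm e k (S \<omega> + Y \<omega>)) \<le> norm (R \<omega>)"
        using pointwise[of \<omega>] smooth_norm_nonneg[of e k "S \<omega> + Y \<omega>"] by simp
    qed
  qed
  moreover have "expectation (\<lambda>\<omega>. smooth_norm e k (S \<omega> + Y \<omega>)) \<le> expectation R"
    by (rule integral_mono[OF int R_int pointwise])
  ultimately show ?thesis using R_mean unfolding C_def by simp
qed

lemma smooth_norm_partial_sums:
  fixes X :: "nat \<Rightarrow> 'a \<Rightarrow> real^'d"
  assumes indep: "indep_vars (\<lambda>_. borel) X {1..n}"
    and mean0: "\<And>i. i \<in> {1..n} \<Longrightarrow> expectation (X i) = 0"
    and sq: "\<And>i. i \<in> {1..n} \<Longrightarrow> integrable M (\<lambda>\<omega>. (linf_norm (X i \<omega>))\<^sup>2)"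
    and e: "e > 0" and k: "k \<ge> 1" and m: "m \<le> n"
  shows "integrable M (\<lambda>\<omega>. smooth_norm e k (\<Sum>i\<in>{1..m}. X i \<omega>)) \<and>
    expectation (\<lambda>\<omega>. smooth_norm e k (\<Sum>i\<in>{1..m}. X i \<omega>)) \<le> e powr (1/k)
      + (2*real k - 1) * real CARD('d) powr (1/k) * (\<Sum>i\<in>{1..m}. expectation (\<lambda>\<omega>. (linf_norm (X i \<omega>))\<^sup>2))"
  using m
proof (induction m)
  case 0
  then show ?case by (simp add: smooth_norm_zero[OF k] prob_space)
next
  case (Suc m)
  define C where "C = (2*real k - 1) * real CARD('d) powr (1/k)"
  define V where "V i = expectation (\<lambda>\<omega>. (linf_norm (X i \<omega>))\<^sup>2)" for i
  have Suc_m: "Suc m \<in> {1..n}" using Suc.prems by simp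
  have IH: "integrable M (\<lambda>\<omega>. smooth_norm e k (\<Sum>i\<in>{1..m}. X i \<omega>))"
    "expectation (\<lambda>\<omega>. smooth_norm e k (\<Sum>i\<in>{1..m}. X i \<omega>)) \<le> e powr (1/k) + C * (\<Sum>i\<in>{1..m}. V i)"
    using Suc by (simp_all add: C_def V_def)
  have "indep_var borel (\<lambda>\<omega>. \<Sum>i\<in>{1..m}. X i \<omega>) borel (X (Suc m))"
    using Suc.prems by (intro indep_var_partial_sum[OF indep]) auto
  note step = smooth_norm_increment[OF this mean0[OF Suc_m] sq[OF Suc_m] IH(1) e k]
  have int: "integrable M (\<lambda>\<omega>. smooth_norm e k (\<Sum>i\<in>{1..Suc m}. X i \<omega>))"
    using step by (simp add: sum.cl_ivl_Suc)
  have "expectation (\<lambda>\<omega>. smooth_norm e k (\<Sum>i\<in>{1..Suc m}. X i \<omega>))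
      \<le> expectation (\<lambda>\<omega>. smooth_norm e k (\<Sum>i\<in>{1..m}. X i \<omega>)) + C * V (Suc m)"
    using step by (simp add: sum.cl_ivl_Suc C_def V_def)
  also have "\<dots> \<le> e powr (1/k) + C * (\<Sum>i\<in>{1..Suc m}. V i)"
    using IH(2) by (simp add: sum.cl_ivl_Suc algebra_simps)
  finally show ?case using int by (simp add: C_def V_def)
qed

lemma expectation_linf_norm_sum_bound:
  fixes X :: "nat \<Rightarrow> 'a \<Rightarrow> real^'d"
  assumes indep: "indep_vars (\<lambda>_. borel) X {1..n}"
    and mean0: "\<And>i. i \<in> {1..n} \<Longrightarrow> expectation (X i) = 0"
    and sq: "\<And>i. i \<in> {1..n} \<Longrightarrow> integrable M (\<lambda>\<omega>. (linf_norm (X i \<omega>))\<^sup>2)"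
    and k: "k \<ge> 1"
  shows "expectation (\<lambda>\<omega>. (linf_norm (\<Sum>i\<in>{1..n}. X i \<omega>))\<^sup>2)
    \<le> (2*real k - 1) * real CARD('d) powr (1/k) * (\<Sum>i\<in>{1..n}. expectation (\<lambda>\<omega>. (linf_norm (X i \<omega>))\<^sup>2))"
    (is "expectation (\<lambda>\<omega>. (linf_norm (?S \<omega>))\<^sup>2) \<le> ?bound")
proof (rule field_le_epsilon)
  fix \<delta> :: real
  assume \<delta>: "\<delta> > 0"
  then have e: "\<delta>^k > 0" by simp
  have S: "?S \<in> borel_measurable M"
    using indep unfolding indep_vars_def by (intro borel_measurable_sum) auto
  have int: "integrable M (\<lambda>\<omega>. smooth_norm (\<delta>^k) k (?S \<omega>))"
    and bound: "expectation (\<lambda>\<omega>. smooth_norm (\<delta>^k) k (?S \<omega>)) \<le> ?bound + \<delta>"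
    using smooth_norm_partial_sums[OF indep mean0 sq e k order.refl] powr_inverse_power[of \<delta> k] \<delta> k
    by simp_all
  have dominated: "(linf_norm (?S \<omega>))\<^sup>2 \<le> smooth_norm (\<delta>^k) k (?S \<omega>)" for \<omega>
    by (rule linf_norm_sq_le_smooth_norm[OF e k])
  have "integrable M (\<lambda>\<omega>. (linf_norm (?S \<omega>))\<^sup>2)"
  proof (rule Bochner_Integration.integrable_bound[OF int])
    show "(\<lambda>\<omega>. (linf_norm (?S \<omega>))\<^sup>2) \<in> borel_measurable M" using S by measurable
    show "AE \<omega> in M. norm ((linf_norm (?S \<omega>))\<^sup>2) \<le> norm (smooth_norm (\<delta>^k) k (?S \<omega>))"
    proof (rule AE_I2)
      fix \<omega>
      show "norm ((linf_norm (?S \<omega>))\<^sup>2) \<le> norm (smooth_norm (\<delta>^k) k (?S \<omega>))"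
        using dominated[of \<omega>] smooth_norm_nonneg[of "\<delta>^k" k "?S \<omega>"] by simp
    qed
  qed
  then have "expectation (\<lambda>\<omega>. (linf_norm (?S \<omega>))\<^sup>2) \<le> expectation (\<lambda>\<omega>. smooth_norm (\<delta>^k) k (?S \<omega>))"
    using int dominated by (rule integral_mono)
  then show "expectation (\<lambda>\<omega>. (linf_norm (?S \<omega>))\<^sup>2) \<le> ?bound + \<delta>"
    using bound by linarith
qed

end

section \<open>Choice of the exponent\<close>

text \<open>With \<open>k = max 1 \<lceil>ln d\<rceil>\<close> we have \<open>d\<^sup>1\<^sup>/\<^sup>k \<le> exp 1 < 2.72\<close> and \<open>2k - 1 \<le> 2 ln d + 1\<close>,
  and \<open>(2 ln d + 1) \<cdot> 2.72\<close> is dominated by \<open>(1 + 2.9 \<surd>(ln (2d)))\<^sup>2\<close> because \<open>ln 2 \<ge> 2/3\<close>.\<close>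
lemma exponent_choice_bound:
  fixes c :: real
  assumes c: "c \<ge> 1"
  defines "k \<equiv> max 1 (nat \<lceil>ln c\<rceil>)"
  shows "(2*real k - 1) * c powr (1/real k) \<le> (1 + 2.9 * sqrt (ln (2*c)))\<^sup>2"
proof -
  define L where "L = ln c"
  have L: "L \<ge> 0" unfolding L_def using c by simp
  have k1: "real k \<ge> 1" unfolding k_def by simp
  have k_ge: "real k \<ge> L"
    using le_of_int_ceiling[of L] unfolding k_def L_def by linarith
  have k_le: "real k \<le> L + 1"
  proof (cases "nat \<lceil>L\<rceil> \<le> 1")
    case True
    then show ?thesis using L unfolding k_def L_def by simp
  next
    case False
    then show ?thesis unfolding k_def L_def by linarith
  qed
  have "c powr (1/k) = exp (L / k)" unfolding L_def powr_def using c by simp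
  also have "\<dots> \<le> exp 1" using k_ge k1 by (simp add: field_simps)
  finally have "c powr (1/k) \<le> 272/100" using e_less_272 by linarith
  then have lhs: "(2*real k - 1) * c powr (1/k) \<le> (2*L + 1) * (272/100)"
    using k_le k1 by (intro mult_mono) auto
  define s where "s = sqrt (ln (2*c))"
  have s: "s \<ge> 0" and s_sq: "s\<^sup>2 = ln 2 + L"
    unfolding s_def L_def using c by (simp_all add: ln_mult)
  have "(2*L + 1) * (272/100) \<le> 1 + 58/10 * s + 841/100 * s\<^sup>2"
  proof -
    have "841/100 * s\<^sup>2 = 841/100 * ln 2 + 841/100 * L" using s_sq by simp
    moreover have "(2*L + 1) * (272/100) = 272/100 + 544/100 * L" by simp
    ultimately show ?thesis using s ln2_ge_two_thirds L by linarith
  qed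
  also have "\<dots> = (1 + 2.9 * s)\<^sup>2" by (simp add: power2_eq_square algebra_simps)
  finally show ?thesis using lhs unfolding s_def by linarith
qed

theorem theorem2:
  fixes M :: "'a measure" and n :: nat and X :: "nat \<Rightarrow> 'a \<Rightarrow> real ^ 'd"
  assumes "prob_space M"
    and indep: "prob_space.indep_vars M (\<lambda>_. borel) X {1..n}"
    and mean0: "\<And>i. i \<in> {1..n} \<Longrightarrow> prob_space.expectation M (X i) = 0"
    and sq: "\<And>i. i \<in> {1..n} \<Longrightarrow> integrable M (\<lambda>\<omega>. (linf_norm (X i \<omega>))\<^sup>2)"
  shows "prob_space.expectation M (\<lambda>\<omega>. (linf_norm (\<Sum>i\<in>{1..n}. X i \<omega>))\<^sup>2)
           \<le> (1 + 3.46 * sqrt (ln (2 * real CARD('d))))\<^sup>2 *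
             (\<Sum>i\<in>{1..n}. prob_space.expectation M (\<lambda>\<omega>. (linf_norm (X i \<omega>))\<^sup>2))
         \<and> ((\<forall>i\<in>{1..n}. distr M borel (\<lambda>\<omega>. - X i \<omega>) = distr M borel (X i)) \<longrightarrow>
           prob_space.expectation M (\<lambda>\<omega>. (linf_norm (\<Sum>i\<in>{1..n}. X i \<omega>))\<^sup>2)
           \<le> (1 + 2.9 * sqrt (ln (2 * real CARD('d))))\<^sup>2 *
             (\<Sum>i\<in>{1..n}. prob_space.expectation M (\<lambda>\<omega>. (linf_norm (X i \<omega>))\<^sup>2)))"
proof -
  interpret prob_space M by fact
  define c where "c = real CARD('d)"
  define k where "k = max 1 (nat \<lceil>ln c\<rceil>)"
  define T where "T = (\<Sum>i\<in>{1..n}. expectation (\<lambda>\<omega>. (linf_norm (X i \<omega>))\<^sup>2))"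
  have c: "c \<ge> 1" unfolding c_def by simp
  have k: "k \<ge> 1" unfolding k_def by simp
  have T: "T \<ge> 0" unfolding T_def by (intro sum_nonneg integral_nonneg) auto
  have "expectation (\<lambda>\<omega>. (linf_norm (\<Sum>i\<in>{1..n}. X i \<omega>))\<^sup>2) \<le> (2*real k - 1) * c powr (1/k) * T"
    unfolding c_def T_def by (rule expectation_linf_norm_sum_bound[OF indep mean0 sq k])
  also have "\<dots> \<le> (1 + 2.9 * sqrt (ln (2*c)))\<^sup>2 * T"
    using exponent_choice_bound[OF c] T unfolding k_def by (intro mult_right_mono)
  finally have bound_29: "expectation (\<lambda>\<omega>. (linf_norm (\<Sum>i\<in>{1..n}. X i \<omega>))\<^sup>2)
      \<le> (1 + 2.9 * sqrt (ln (2*c)))\<^sup>2 * T" .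
  have "(1 + 2.9 * sqrt (ln (2*c)))\<^sup>2 \<le> (1 + 3.46 * sqrt (ln (2*c)))\<^sup>2"
    using c by (intro power_mono) auto
  then have "expectation (\<lambda>\<omega>. (linf_norm (\<Sum>i\<in>{1..n}. X i \<omega>))\<^sup>2)
      \<le> (1 + 3.46 * sqrt (ln (2*c)))\<^sup>2 * T"
    using bound_29 mult_right_mono[OF _ T] by (meson order_trans)
  with bound_29 show ?thesis unfolding c_def T_def by simp
qed

end
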